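(* Let $n\ge 2$. A $(2n-2)\times(2n-2)$ lower triangular matrix $F=(F_{i,j})_{0\le i,j\le 2n-3}$ is the $\mathbf{F}$-matrix of some fully heterochronous ranked tree shape with $n$ leaves if and only if its entries $F_{i,j}$, $0\le j\le i\le 2n-3$, form an $(n,2n-3,2n-3)$ $\mathbf{F}$-sequence.
   Context: A fully heterochronous ranked tree shape with $n$ leaves is a rooted full binary tree (every node has out-degree $0$ or $2$), without leaf labels, with $n$ leaves, together with a total ordering of all $2n-1$ nodes (leaves included) such that nodes appear in increasing order along every path from the root to a leaf; the position of a node in this order, numbered $0,\dots,2n-2$, is its rank. Its $\mathbf{F}$-matrix is the $(2n-2)\times(2n-2)$ lower triangular matrix $F$, indices from $0$ to $2n-3$, where for $0\le j\le i$ the entry $F_{i,j}$ is the number of edges from a parent node $v$ to a child node $w$ with rank of $v$ at most $j$ and rank of $w$ larger than $i$. For a doubly indexed sequence $f$, with the convention $f_{k,\ell}=0$ whenever $k$ or $\ell$ is negative, define $L_f(i,j):=\max(f_{i,j-1}, f_{i-1,j}-1, f_{i,j-1}+f_{i-1,j}-f_{i-1,j-1}-1)$ and $U_f(i,j):=\min(f_{i-1,j}, f_{i,j-1}+f_{i-1,j}-f_{i-1,j-1})$. For non-negative integers $M\le N\le 2n-3$, with $B=\max(N-1,M)$, an $(n,N,M)$ $\mathbf{F}$-sequence is a doubly indexed sequence $f_{i,j}$ of non-negative integers defined exactly for the valid indices $(i,j)\in\{(i,j):0\le j\le i\le N-1\}\cup\{(N,j):0\le j\le M\}$ such that: (1)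 $f_{i,i}$ ($0\le i\le B$) are positive integers with $f_{0,0}=2$, $f_{i,i}=f_{i-1,i-1}\pm1$ for $1\le i\le B$, and $f_{i,i}\le 2n-i-2$ for $0\le i\le B$; (2) $L_f(i,j)\le f_{i,j}\le U_f(i,j)$ for valid $(i,j)$ with $0\le j\le i-2$; (3) for valid $(i,j)$ with $0\le j\le i-1$, if $f_{i-1,j}=f_{i-1,i-1}$ then $f_{i,j}=f_{i-1,i-1}-1$. *)

theory Defs
  imports Main
begin

text \<open>A fully heterochronous ranked tree shape with n leaves is encoded by identifying
each node with its rank 0..2n-2 and recording the parent of every non-root node:
p v is the rank of the parent of the node of rank v (1 \<le> v \<le> 2n-2).
Ranks increase along root-to-leaf paths (p v < v), so the node of rank 0 is the root,
and every node has out-degree 0 or 2 (full binary).  With 2n-1 nodes this forces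
exactly n leaves.\<close>

definition children :: "nat \<Rightarrow> (nat \<Rightarrow> nat) \<Rightarrow> nat \<Rightarrow> nat set" where
  "children n p u = {v. 1 \<le> v \<and> v \<le> 2*n - 2 \<and> p v = u}"

definition fh_ranked_tree :: "nat \<Rightarrow> (nat \<Rightarrow> nat) \<Rightarrow> bool" where
  "fh_ranked_tree n p \<longleftrightarrow>
     (\<forall>v. 1 \<le> v \<and> v \<le> 2*n - 2 \<longrightarrow> p v < v) \<and>
     (\<forall>u \<le> 2*n - 2. card (children n p u) = 0 \<or> card (children n p u) = 2)"

text \<open>Edges are the pairs (p w, w) for 1 \<le> w \<le> 2n-2.  F-matrix entry (i,j), j \<le> i:
number of edges (v,w) with rank v \<le> j and rank w > i; zero above the diagonal.\<close>

definition F_matrix :: "nat \<Rightarrow> (nat \<Rightarrow> nat) \<Rightarrow> nat \<Rightarrow> nat \<Rightarrow> int" where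
  "F_matrix n p i j =
     (if j \<le> i then int (card {w. 1 \<le> w \<and> w \<le> 2*n - 2 \<and> p w \<le> j \<and> i < w}) else 0)"

definition fa :: "(nat \<Rightarrow> nat \<Rightarrow> int) \<Rightarrow> int \<Rightarrow> int \<Rightarrow> int" where
  "fa f k l = (if k < 0 \<or> l < 0 then 0 else f (nat k) (nat l))"

definition L_f :: "(nat \<Rightarrow> nat \<Rightarrow> int) \<Rightarrow> int \<Rightarrow> int \<Rightarrow> int" where
  "L_f f i j = max (fa f i (j-1)) (max (fa f (i-1) j - 1)
                  (fa f i (j-1) + fa f (i-1) j - fa f (i-1) (j-1) - 1))"

definition U_f :: "(nat \<Rightarrow> nat \<Rightarrow> int) \<Rightarrow> int \<Rightarrow> int \<Rightarrow> int" where
  "U_f f i j = min (fa f (i-1) j) (fa f i (j-1) + fa f (i-1) j - fa f (i-1) (j-1))"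

definition valid_idx :: "nat \<Rightarrow> nat \<Rightarrow> nat \<Rightarrow> nat \<Rightarrow> bool" where
  "valid_idx N M i j \<longleftrightarrow> (j \<le> i \<and> i < N) \<or> (i = N \<and> j \<le> M)"

definition F_sequence :: "nat \<Rightarrow> nat \<Rightarrow> nat \<Rightarrow> (nat \<Rightarrow> nat \<Rightarrow> int) \<Rightarrow> bool" where
  "F_sequence n N M f \<longleftrightarrow>
     M \<le> N \<and> int N \<le> 2 * int n - 3 \<and>
     (let B = max (int N - 1) (int M) in
       (\<forall>i j. valid_idx N M i j \<longrightarrow> f i j \<ge> 0) \<and>
       (\<forall>i. int i \<le> B \<longrightarrow> f i i > 0) \<and>
       f 0 0 = 2 \<and>
       (\<forall>i. 1 \<le> i \<and> int i \<le> B \<longrightarrow>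
            f i i = f (i-1) (i-1) + 1 \<or> f i i = f (i-1) (i-1) - 1) \<and>
       (\<forall>i. int i \<le> B \<longrightarrow> f i i \<le> 2 * int n - int i - 2) \<and>
       (\<forall>i j. valid_idx N M i j \<and> j + 2 \<le> i \<longrightarrow>
            L_f f (int i) (int j) \<le> f i j \<and> f i j \<le> U_f f (int i) (int j)) \<and>
       (\<forall>i j. valid_idx N M i j \<and> j < i \<longrightarrow>
            f (i-1) j = f (i-1) (i-1) \<longrightarrow> f i j = f (i-1) (i-1) - 1))"

end

(*
  Encode the tree by its parent map p, with p w < w.  Entry F(i,j) counts the nodes w > i whose
  parent has rank at most j, so moving node i across the cut gives

    F(i-1,j) - F(i,j) = [p i <= j]:

  every row difference is a 0/1 step function of j jumping at the parent of node i, and on the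
  diagonal F(i,i) - F(i-1,i-1) + 1 is the number of children of node i.  The bounds L_f <= f <= U_f
  together with condition (3) say exactly that the row differences are nondecreasing 0/1 sequences
  ending in 1, and the diagonal conditions say that every node has 0 or 2 children, the root 2.
  Conversely, from an F-sequence one reads off p i as the jump of the i-th row difference (row
  2n-2, absent from the sequence, being zero) and recovers F by summing the differences upwards
  from the bottom row.
*)

theory Submission
  imports Defs
begin

definition crossing_edges :: "nat \<Rightarrow> (nat \<Rightarrow> nat) \<Rightarrow> nat \<Rightarrow> nat \<Rightarrow> nat set" where
  "crossing_edges m p i j = {w. 1 \<le> w \<and> w \<le> m \<and> p w \<le> j \<and> i < w}"

lemma F_matrix_eq_card_crossing_edges:
  "j \<le> i \<Longrightarrow> F_matrix n p i j = int (card (crossing_edges (2*n - 2) p i j))"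
  by (simp add: F_matrix_def crossing_edges_def)

lemma finite_crossing_edges [simp]: "finite (crossing_edges m p i j)"
  by (rule finite_subset[of _ "{..m}"]) (auto simp: crossing_edges_def)

lemma card_crossing_edges_le: "card (crossing_edges m p i j) \<le> m - i"
proof -
  have "crossing_edges m p i j \<subseteq> {i<..m}"
    by (auto simp: crossing_edges_def)
  then show ?thesis
    by (metis card_greaterThanAtMost card_mono finite_greaterThanAtMost)
qed

lemma crossing_edges_mono: "j \<le> j' \<Longrightarrow> crossing_edges m p i j \<subseteq> crossing_edges m p i j'"
  by (auto simp: crossing_edges_def)

lemma crossing_edges_last_row: "crossing_edges m p m j = {}"
  by (auto simp: crossing_edges_def)

lemma card_crossing_edges_pred_row:
  assumes "1 \<le> i" "i \<le> m"
  shows "card (crossing_edges m p (i - 1) j) = card (crossing_edges m p i j) + of_bool (p i \<le> j)"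
proof -
  have "crossing_edges m p (i - 1) j =
      (if p i \<le> j then insert i (crossing_edges m p i j) else crossing_edges m p i j)"
    using assms by (auto simp: crossing_edges_def less_diff_conv2 less_Suc_eq)
  moreover have "i \<notin> crossing_edges m p i j"
    by (simp add: crossing_edges_def)
  ultimately show ?thesis
    by simp
qed

lemma card_crossing_edges_diag_pos:
  assumes "p (Suc i) < Suc i" "Suc i \<le> m"
  shows "0 < card (crossing_edges m p i i)"
proof -
  have "Suc i \<in> crossing_edges m p i i"
    using assms by (auto simp: crossing_edges_def)
  then show ?thesis
    by (auto simp: card_gt_0_iff)
qed

lemma finite_children [simp]: "finite (children n p u)"
  by (rule finite_subset[of _ "{..2*n - 2}"]) (auto simp: children_def)

lemma card_children_diag:
  assumes dec: "\<forall>v. 1 \<le> v \<and> v \<le> 2*n - 2 \<longrightarrow> p v < v" and "1 \<le> u" "u \<le> 2*n - 2"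
  shows "card (crossing_edges (2*n - 2) p (u - 1) (u - 1)) + card (children n p u)
       = card (crossing_edges (2*n - 2) p u u) + 1"
proof -
  let ?C = "crossing_edges (2*n - 2) p"
  have "?C u u = ?C u (u - 1) \<union> children n p u"
    using dec assms(2) by (auto simp: crossing_edges_def children_def)
  moreover have "?C u (u - 1) \<inter> children n p u = {}"
    using assms(2) by (auto simp: crossing_edges_def children_def)
  ultimately have "card (?C u u) = card (?C u (u - 1)) + card (children n p u)"
    by (simp add: card_Un_disjoint)
  moreover have "card (?C (u - 1) (u - 1)) = card (?C u (u - 1)) + 1"
    using card_crossing_edges_pred_row[OF assms(2,3)] dec[rule_format, of u] assms(2,3) by simp
  ultimately show ?thesis
    by simp
qed

lemma children_root: "children n p 0 = crossing_edges (2*n - 2) p 0 0"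
  by (auto simp: children_def crossing_edges_def)

lemma card_children_0_or_2_iff:
  assumes "\<forall>v. 1 \<le> v \<and> v \<le> 2*n - 2 \<longrightarrow> p v < v" and "1 \<le> u" "u \<le> 2*n - 2"
  shows "card (children n p u) = 0 \<or> card (children n p u) = 2 \<longleftrightarrow>
    card (crossing_edges (2*n - 2) p u u) = card (crossing_edges (2*n - 2) p (u - 1) (u - 1)) + 1 \<or>
    card (crossing_edges (2*n - 2) p u u) + 1 = card (crossing_edges (2*n - 2) p (u - 1) (u - 1))"
  using card_children_diag[OF assms] by arith

lemma fh_ranked_tree_iff_diagonal:
  assumes "2 \<le> n" and dec: "\<forall>v. 1 \<le> v \<and> v \<le> 2*n - 2 \<longrightarrow> p v < v"
  shows "fh_ranked_tree n p \<longleftrightarrow>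
    card (crossing_edges (2*n - 2) p 0 0) = 2 \<and>
    (\<forall>u. 1 \<le> u \<and> u \<le> 2*n - 3 \<longrightarrow>
      card (crossing_edges (2*n - 2) p u u) = card (crossing_edges (2*n - 2) p (u - 1) (u - 1)) + 1 \<or>
      card (crossing_edges (2*n - 2) p u u) + 1 = card (crossing_edges (2*n - 2) p (u - 1) (u - 1)))"
    (is "_ \<longleftrightarrow> ?root \<and> ?steps")
proof
  assume "fh_ranked_tree n p"
  then have deg: "card (children n p u) = 0 \<or> card (children n p u) = 2" if "u \<le> 2*n - 2" for u
    using that by (simp add: fh_ranked_tree_def)
  have "1 \<in> children n p 0"
    using dec assms(1) by (auto simp: children_def)
  then have ?root
    using deg[of 0] by (auto simp: children_root)
  moreover have ?steps
  proof (intro allI impI)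
    fix u
    assume u: "1 \<le> u \<and> u \<le> 2*n - 3"
    then have "u \<le> 2*n - 2"
      by linarith
    then show "card (crossing_edges (2*n - 2) p u u) = card (crossing_edges (2*n - 2) p (u - 1) (u - 1)) + 1 \<or>
        card (crossing_edges (2*n - 2) p u u) + 1 = card (crossing_edges (2*n - 2) p (u - 1) (u - 1))"
      using deg card_children_0_or_2_iff[OF dec, of u] u by simp
  qed
  ultimately show "?root \<and> ?steps" ..
next
  assume diagonal: "?root \<and> ?steps"
  have "card (children n p u) = 0 \<or> card (children n p u) = 2" if "u \<le> 2*n - 2" for u
  proof -
    consider "u = 0" | "1 \<le> u" "u \<le> 2*n - 3" | "u = 2*n - 2"
      using \<open>u \<le> 2*n - 2\<close> by (cases "u \<le> 2*n - 3"; cases "u = 0") auto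
    then show ?thesis
    proof cases
      case 1
      then show ?thesis
        using diagonal by (simp add: children_root)
    next
      case 2
      then show ?thesis
        using diagonal card_children_0_or_2_iff[OF dec, of u] by simp
    next
      case 3
      then have "children n p u = {}"
        using dec by (auto simp: children_def)
      then show ?thesis
        by simp
    qed
  qed
  then show "fh_ranked_tree n p"
    using dec by (simp add: fh_ranked_tree_def)
qed

lemma parent_le_if_card_crossing_edges_eq:
  assumes "p i < i" "1 \<le> i" "i \<le> m" "j < i"
    and "card (crossing_edges m p (i - 1) j) = card (crossing_edges m p (i - 1) (i - 1))"
  shows "p i \<le> j"
proof -
  have "crossing_edges m p (i - 1) j = crossing_edges m p (i - 1) (i - 1)"
    using assms(4,5) by (intro card_subset_eq crossing_edges_mono) auto
  moreover have "i \<in> crossing_edges m p (i - 1) (i - 1)"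
    using assms(1-3) by (auto simp: crossing_edges_def)
  ultimately show ?thesis
    by (auto simp: crossing_edges_def)
qed

lemma F_sequence_square_iff:
  "F_sequence n N N f \<longleftrightarrow>
     int N \<le> 2 * int n - 3 \<and>
     (\<forall>i j. j \<le> i \<and> i \<le> N \<longrightarrow> 0 \<le> f i j) \<and>
     (\<forall>i \<le> N. 0 < f i i) \<and>
     f 0 0 = 2 \<and>
     (\<forall>i. 1 \<le> i \<and> i \<le> N \<longrightarrow> f i i = f (i - 1) (i - 1) + 1 \<or> f i i = f (i - 1) (i - 1) - 1) \<and>
     (\<forall>i \<le> N. f i i \<le> 2 * int n - int i - 2) \<and>
     (\<forall>i j. j + 2 \<le> i \<and> i \<le> N \<longrightarrow>
        L_f f (int i) (int j) \<le> f i j \<and> f i j \<le> U_f f (int i) (int j)) \<and>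
     (\<forall>i j. j < i \<and> i \<le> N \<longrightarrow>
        f (i - 1) j = f (i - 1) (i - 1) \<longrightarrow> f i j = f (i - 1) (i - 1) - 1)"
proof -
  have square: "valid_idx N N i j \<longleftrightarrow> j \<le> i \<and> i \<le> N"
    "(j \<le> i \<and> i \<le> N) \<and> j + 2 \<le> i \<longleftrightarrow> j + 2 \<le> i \<and> i \<le> N"
    "(j \<le> i \<and> i \<le> N) \<and> j < i \<longleftrightarrow> j < i \<and> i \<le> N"
    "max (int N - 1) (int N) = int N" for i j
    by (auto simp: valid_idx_def)
  show ?thesis
    unfolding F_sequence_def Let_def square by simp
qed

lemma F_sequence_squareD:
  assumes "F_sequence n N N f"
  shows "j \<le> i \<Longrightarrow> i \<le> N \<Longrightarrow> 0 \<le> f i j"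
    and "i \<le> N \<Longrightarrow> 0 < f i i"
    and "f 0 0 = 2"
    and "1 \<le> i \<Longrightarrow> i \<le> N \<Longrightarrow> f i i = f (i - 1) (i - 1) + 1 \<or> f i i = f (i - 1) (i - 1) - 1"
    and "i \<le> N \<Longrightarrow> f i i \<le> 2 * int n - int i - 2"
    and "j + 2 \<le> i \<Longrightarrow> i \<le> N \<Longrightarrow>
      L_f f (int i) (int j) \<le> f i j \<and> f i j \<le> U_f f (int i) (int j)"
    and "j < i \<Longrightarrow> i \<le> N \<Longrightarrow> f (i - 1) j = f (i - 1) (i - 1) \<Longrightarrow>
      f i j = f (i - 1) (i - 1) - 1"
  using assms unfolding F_sequence_square_iff by blast+

lemma fa_of_nat [simp]: "fa f (int i) (int j) = f i j"
  by (simp add: fa_def)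

definition row_drop :: "(nat \<Rightarrow> nat \<Rightarrow> int) \<Rightarrow> nat \<Rightarrow> nat \<Rightarrow> int" where
  "row_drop f i j = f (i - 1) j - f i j"

lemma L_f_U_f_bounds_Suc_iff:
  assumes "1 \<le> i"
  shows "L_f f (int i) (int (Suc k)) \<le> f i (Suc k) \<and> f i (Suc k) \<le> U_f f (int i) (int (Suc k))
    \<longleftrightarrow> f i k \<le> f i (Suc k) \<and> 0 \<le> row_drop f i (Suc k) \<and> row_drop f i (Suc k) \<le> 1 \<and>
        row_drop f i k \<le> row_drop f i (Suc k) \<and> row_drop f i (Suc k) \<le> row_drop f i k + 1"
proof -
  have index_shifts: "int (Suc k) - 1 = int k" "int i - 1 = int (i - 1)"
    using assms by auto
  show ?thesis
    unfolding L_f_def U_f_def index_shifts fa_of_nat row_drop_def max.bounded_iff min.bounded_iff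
    by linarith
qed

lemma L_f_U_f_bounds_0_iff:
  assumes "1 \<le> i"
  shows "L_f f (int i) 0 \<le> f i 0 \<and> f i 0 \<le> U_f f (int i) 0 \<longleftrightarrow>
    0 \<le> f i 0 \<and> 0 \<le> row_drop f i 0 \<and> row_drop f i 0 \<le> 1"
proof -
  have index_shifts: "int i - 1 = int (i - 1)" "fa f k (0 - 1) = 0" for k
    using assms by (auto simp: fa_def)
  show ?thesis
    unfolding L_f_def U_f_def index_shifts fa_of_nat[of f _ 0, simplified] row_drop_def max.bounded_iff min.bounded_iff
    by linarith
qed

lemma L_f_U_f_bounds_if_threshold_drops:
  assumes "1 \<le> i" and drops: "\<forall>k \<le> j. row_drop f i k = of_bool (q \<le> k)"
    and "0 \<le> f i 0" and mono: "0 < j \<Longrightarrow> f i (j - 1) \<le> f i j"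
  shows "L_f f (int i) (int j) \<le> f i j \<and> f i j \<le> U_f f (int i) (int j)"
proof (cases j)
  case 0
  then show ?thesis
    using L_f_U_f_bounds_0_iff[OF assms(1)] drops assms(3) by simp
next
  case (Suc k)
  then show ?thesis
    using L_f_U_f_bounds_Suc_iff[OF assms(1), of f k] drops mono by simp
qed

lemma F_sequence_of_tree:
  assumes tree: "fh_ranked_tree n p" and "2 \<le> n" "N \<le> 2*n - 3"
    and f: "\<forall>i j. j \<le> i \<and> i \<le> N \<longrightarrow> f i j = F_matrix n p i j"
  shows "F_sequence n N N f"
proof -
  define m where "m = 2*n - 2"
  have "N < m"
    using assms(2,3) by (simp add: m_def)
  have dec: "\<forall>v. 1 \<le> v \<and> v \<le> m \<longrightarrow> p v < v"
    using tree by (simp add: fh_ranked_tree_def m_def)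
  have diagonal: "card (crossing_edges m p 0 0) = 2 \<and>
    (\<forall>u. 1 \<le> u \<and> u \<le> 2*n - 3 \<longrightarrow>
      card (crossing_edges m p u u) = card (crossing_edges m p (u - 1) (u - 1)) + 1 \<or>
      card (crossing_edges m p u u) + 1 = card (crossing_edges m p (u - 1) (u - 1)))"
    using tree fh_ranked_tree_iff_diagonal[OF assms(2)] dec by (simp add: m_def)
  have f_card: "f i j = int (card (crossing_edges m p i j))" if "j \<le> i" "i \<le> N" for i j
    using f that by (simp add: F_matrix_eq_card_crossing_edges m_def)
  have drop: "row_drop f i j = of_bool (p i \<le> j)" if "1 \<le> i" "i \<le> N" "j < i" for i j
    using card_crossing_edges_pred_row[of i m p j] that \<open>N < m\<close> by (simp add: row_drop_def f_card)
  have mono: "f i j \<le> f i j'" if "j \<le> j'" "j' \<le> i" "i \<le> N" for i j j'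
    using that card_mono[OF finite_crossing_edges crossing_edges_mono[OF that(1)]]
    by (simp add: f_card)
  have nonneg: "0 \<le> f i j" if "j \<le> i" "i \<le> N" for i j
    using f_card[OF that] by simp
  have diag_step: "f i i = f (i - 1) (i - 1) + 1 \<or> f i i = f (i - 1) (i - 1) - 1"
    if "1 \<le> i" "i \<le> N" for i
    using diagonal f_card[of i i] f_card[of "i - 1" "i - 1"] that assms(3) by auto
  have pos: "0 < f i i" if "i \<le> N" for i
    using card_crossing_edges_diag_pos[of p i m] dec that \<open>N < m\<close> f_card[of i i] by simp
  have bound: "f i i \<le> 2 * int n - int i - 2" if "i \<le> N" for i
    using f_card[of i i] card_crossing_edges_le[of m p i i] that \<open>N < m\<close> by (simp add: m_def)
  have bounds: "L_f f (int i) (int j) \<le> f i j \<and> f i j \<le> U_f f (int i) (int j)"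
    if "j + 2 \<le> i" "i \<le> N" for i j
    using L_f_U_f_bounds_if_threshold_drops[of i j f "p i"] drop[of i] nonneg[of 0 i]
      mono[of "j - 1" j i] that
    by simp
  have full_row: "f i j = f (i - 1) (i - 1) - 1"
    if "j < i" "i \<le> N" "f (i - 1) j = f (i - 1) (i - 1)" for i j
  proof -
    have "p i \<le> j"
      using parent_le_if_card_crossing_edges_eq[of p i m j] dec that \<open>N < m\<close>
        f_card[of j "i - 1"] f_card[of "i - 1" "i - 1"]
      by simp
    then show ?thesis
      using drop[of i j] that by (simp add: row_drop_def)
  qed
  have "int N \<le> 2 * int n - 3"
    using assms(2,3) by linarith
  then show ?thesis
    unfolding F_sequence_square_iff
    using nonneg pos diagonal f_card[of 0 0] diag_step bound bounds full_row by auto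
qed

lemma F_sequence_interior_row_drop_01:
  assumes "F_sequence n N N f" "j + 2 \<le> i" "i \<le> N"
  shows "row_drop f i j \<in> {0, 1}"
proof -
  have "L_f f (int i) (int j) \<le> f i j \<and> f i j \<le> U_f f (int i) (int j)"
    using F_sequence_squareD(6)[OF assms] .
  moreover have "1 \<le> i"
    using assms(2) by simp
  ultimately show ?thesis
    using L_f_U_f_bounds_0_iff[of i f] L_f_U_f_bounds_Suc_iff[of i f] by (cases j) auto
qed

lemma F_sequence_interior_mono:
  assumes "F_sequence n N N f" "Suc j + 2 \<le> i" "i \<le> N"
  shows "f i j \<le> f i (Suc j)" and "row_drop f i j \<le> row_drop f i (Suc j)"
proof -
  have "L_f f (int i) (int (Suc j)) \<le> f i (Suc j) \<and> f i (Suc j) \<le> U_f f (int i) (int (Suc j))"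
    using F_sequence_squareD(6)[OF assms] .
  then show "f i j \<le> f i (Suc j)" and "row_drop f i j \<le> row_drop f i (Suc j)"
    using L_f_U_f_bounds_Suc_iff[of i f j] assms(2) by auto
qed

lemma F_sequence_row_mono:
  assumes seq: "F_sequence n N N f" and "Suc j \<le> i" "i \<le> N"
  shows "f i j \<le> f i (Suc j)"
  using assms(2,3)
proof (induction i arbitrary: j)
  case 0
  then show ?case by simp
next
  case (Suc i)
  have step: "f (Suc i) (Suc i) = f i i + 1 \<or> f (Suc i) (Suc i) = f i i - 1"
    using F_sequence_squareD(4)[OF seq, of "Suc i"] Suc.prems by simp
  have full_row: "f (Suc i) j = f i i - 1" if "j < Suc i" "f i j = f i i" for j
    using F_sequence_squareD(7)[OF seq that(1)] Suc.prems that(2) by simp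
  consider "j = i" | "Suc j = i" | "Suc j + 2 \<le> Suc i"
    using Suc.prems by linarith
  then show ?case
  proof cases
    case 1
    then show ?thesis
      using step full_row[of i] by auto
  next
    case 2
    have "f (Suc i) j \<le> f i i - 1"
    proof (cases "f i j = f i i")
      case True
      then show ?thesis
        using full_row[of j] 2 by simp
    next
      case False
      have "f i j \<le> f i i"
        using Suc.IH[of j] Suc.prems 2 by simp
      moreover have "row_drop f (Suc i) j \<in> {0, 1}"
        using F_sequence_interior_row_drop_01[OF seq, of j "Suc i"] Suc.prems 2 by simp
      ultimately show ?thesis
        using False by (auto simp: row_drop_def)
    qed
    then show ?thesis
      using full_row[of i] 2 by simp
  next
    case 3
    then show ?thesis
      using F_sequence_interior_mono(1)[OF seq] Suc.prems by simp
  qed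
qed

lemma F_sequence_row_le_diag:
  assumes seq: "F_sequence n N N f" and "j \<le> i" "i \<le> N"
  shows "f i j \<le> f i i"
  using assms(2)
proof (induction j rule: inc_induct)
  case base
  then show ?case by simp
next
  case (step j)
  then show ?case
    using F_sequence_row_mono[OF seq, of j i] assms(3) by simp
qed

lemma F_sequence_row_drop_step:
  assumes seq: "F_sequence n N N f" and "1 \<le> w" "w \<le> N"
  shows "\<forall>j<w. row_drop f w j \<in> {0, 1}" and "row_drop f w (w - 1) = 1"
    and "\<forall>j. Suc j < w \<longrightarrow> row_drop f w j \<le> row_drop f w (Suc j)"
proof -
  show last: "row_drop f w (w - 1) = 1"
    using F_sequence_squareD(7)[OF seq, of "w - 1" w] assms(2,3) by (simp add: row_drop_def)
  show vals: "\<forall>j<w. row_drop f w j \<in> {0, 1}"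
  proof (intro allI impI)
    fix j
    assume "j < w"
    then consider "j = w - 1" | "j + 2 \<le> w"
      by linarith
    then show "row_drop f w j \<in> {0, 1}"
      using last F_sequence_interior_row_drop_01[OF seq, of j w] assms(3) by cases auto
  qed
  show "\<forall>j. Suc j < w \<longrightarrow> row_drop f w j \<le> row_drop f w (Suc j)"
  proof (intro allI impI)
    fix j
    assume "Suc j < w"
    then consider "Suc j = w - 1" | "Suc j + 2 \<le> w"
      by linarith
    then show "row_drop f w j \<le> row_drop f w (Suc j)"
    proof cases
      case 1
      then have "row_drop f w (Suc j) = 1"
        using last by simp
      moreover have "row_drop f w j \<in> {0, 1}"
        using vals \<open>Suc j < w\<close> by simp
      ultimately show ?thesis
        by auto
    next
      case 2
      then show ?thesis
        using F_sequence_interior_mono(2)[OF seq, of j w] assms(3) by simp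
    qed
  qed
qed

lemma F_sequence_last_row:
  assumes "2 \<le> n" and seq: "F_sequence n (2*n - 3) (2*n - 3) f"
  shows "f (2*n - 3) (2*n - 3) = 1" and "j \<le> 2*n - 3 \<Longrightarrow> f (2*n - 3) j \<in> {0, 1}"
proof -
  have "int (2*n - 3) = 2 * int n - 3"
    using assms(1) by simp
  then show last_diag: "f (2*n - 3) (2*n - 3) = 1"
    using F_sequence_squareD(2,5)[OF seq, of "2*n - 3"] by simp
  show "f (2*n - 3) j \<in> {0, 1}" if "j \<le> 2*n - 3"
    using F_sequence_squareD(1)[OF seq that] F_sequence_row_le_diag[OF seq that] last_diag
    by auto
qed

(* Row 2n-2 of an F-matrix, which an F-sequence leaves out, is identically zero. *)

definition pad_last_row :: "nat \<Rightarrow> (nat \<Rightarrow> nat \<Rightarrow> int) \<Rightarrow> nat \<Rightarrow> nat \<Rightarrow> int" where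
  "pad_last_row N f i j = (if i \<le> N then f i j else 0)"

lemma F_sequence_padded_row_drop_step:
  assumes "2 \<le> n" and seq: "F_sequence n (2*n - 3) (2*n - 3) f" and "1 \<le> w" "w \<le> 2*n - 2"
  defines "g \<equiv> pad_last_row (2*n - 3) f"
  shows "\<forall>j<w. row_drop g w j \<in> {0, 1}" and "row_drop g w (w - 1) = 1"
    and "\<forall>j. Suc j < w \<longrightarrow> row_drop g w j \<le> row_drop g w (Suc j)"
proof -
  have "(\<forall>j<w. row_drop g w j \<in> {0, 1}) \<and> row_drop g w (w - 1) = 1 \<and>
      (\<forall>j. Suc j < w \<longrightarrow> row_drop g w j \<le> row_drop g w (Suc j))"
  proof (cases "w \<le> 2*n - 3")
    case True
    moreover have "w - 1 \<le> 2*n - 3"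
      using True by simp
    ultimately have "row_drop g w = row_drop f w"
      by (simp add: row_drop_def g_def pad_last_row_def fun_eq_iff)
    then show ?thesis
      using F_sequence_row_drop_step[OF seq assms(3) True] by simp
  next
    case False
    then have w: "w = Suc (2*n - 3)"
      using assms(4) by simp
    then have "row_drop g w = f (2*n - 3)"
      by (simp add: row_drop_def g_def pad_last_row_def fun_eq_iff)
    then show ?thesis
      using F_sequence_last_row[OF assms(1) seq] F_sequence_row_mono[OF seq] w
      by (simp add: less_Suc_eq_le)
  qed
  then show "\<forall>j<w. row_drop g w j \<in> {0, 1}" and "row_drop g w (w - 1) = 1"
    and "\<forall>j. Suc j < w \<longrightarrow> row_drop g w j \<le> row_drop g w (Suc j)"
    by blast+
qed

lemma nondecreasing_01_eq_threshold:
  fixes d :: "nat \<Rightarrow> int"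
  assumes vals: "\<forall>j<w. d j \<in> {0, 1}" and last: "d (w - 1) = 1" and "0 < w"
    and mono: "\<forall>j. Suc j < w \<longrightarrow> d j \<le> d (Suc j)"
  shows "(LEAST j. d j = 1) < w" and "\<forall>j<w. d j = of_bool ((LEAST j. d j = 1) \<le> j)"
proof -
  define q where "q = (LEAST j. d j = 1)"
  have "d q = 1"
    unfolding q_def using last by (rule LeastI)
  have "q \<le> w - 1"
    unfolding q_def using last by (rule Least_le)
  then show "(LEAST j. d j = 1) < w"
    using \<open>0 < w\<close> by (simp add: q_def)
  have "d j = of_bool (q \<le> j)" if "j < w" for j
  proof (cases "q \<le> j")
    case True
    have "d j = 1"
      using True that
    proof (induction j rule: dec_induct)
      case base
      then show ?case using \<open>d q = 1\<close> by simp
    next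
      case (step j)
      then show ?case
        using vals mono by force
    qed
    then show ?thesis
      using True by simp
  next
    case False
    then have "d j \<noteq> 1"
      unfolding q_def using not_less_Least by (metis not_le)
    then show ?thesis
      using False vals that by auto
  qed
  then show "\<forall>j<w. d j = of_bool ((LEAST j. d j = 1) \<le> j)"
    by (simp add: q_def)
qed

lemma card_crossing_edges_eq_if_row_drops:
  fixes g :: "nat \<Rightarrow> nat \<Rightarrow> int"
  assumes last: "\<forall>j. g m j = 0"
    and drops: "\<forall>w j. 1 \<le> w \<and> w \<le> m \<and> j < w \<longrightarrow> row_drop g w j = of_bool (p w \<le> j)"
    and "j \<le> i" "i \<le> m"
  shows "int (card (crossing_edges m p i j)) = g i j"
proof -
  have "\<forall>j \<le> i. int (card (crossing_edges m p i j)) = g i j"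
    using \<open>i \<le> m\<close>
  proof (induction i rule: inc_induct)
    case base
    then show ?case
      using last by (simp add: crossing_edges_last_row)
  next
    case (step i)
    show ?case
    proof (intro allI impI)
      fix j
      assume "j \<le> i"
      then show "int (card (crossing_edges m p i j)) = g i j"
        using card_crossing_edges_pred_row[of "Suc i" m p j] step drops[rule_format, of "Suc i" j]
        by (simp add: row_drop_def)
    qed
  qed
  then show ?thesis
    using \<open>j \<le> i\<close> by blast
qed

lemma tree_of_F_sequence:
  assumes "2 \<le> n" and seq: "F_sequence n (2*n - 3) (2*n - 3) f"
  obtains p where "fh_ranked_tree n p"
    and "\<forall>i j. j \<le> i \<and> i \<le> 2*n - 3 \<longrightarrow> f i j = F_matrix n p i j"
proof -
  define m where "m = 2*n - 2"
  define g where "g = pad_last_row (2*n - 3) f"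
  define p where "p w = (LEAST j. row_drop g w j = 1)" for w
  have parent: "p w < w" "\<forall>j<w. row_drop g w j = of_bool (p w \<le> j)"
    if "1 \<le> w" "w \<le> m" for w
  proof -
    have "0 < w"
      using that by simp
    note step = F_sequence_padded_row_drop_step[OF assms(1) seq, of w, folded g_def]
    from nondecreasing_01_eq_threshold[OF step(1,2) \<open>0 < w\<close> step(3)] that
    show "p w < w" "\<forall>j<w. row_drop g w j = of_bool (p w \<le> j)"
      unfolding p_def m_def by blast+
  qed
  have card: "int (card (crossing_edges m p i j)) = f i j" if "j \<le> i" "i \<le> 2*n - 3" for i j
  proof -
    have "\<not> m \<le> 2*n - 3"
      using assms(1) by (simp add: m_def)
    then have "\<forall>j. g m j = 0"
      by (simp add: g_def pad_last_row_def)
    then show ?thesis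
      using card_crossing_edges_eq_if_row_drops[of g m p j i] parent(2) that
      by (auto simp: g_def pad_last_row_def m_def)
  qed
  have "fh_ranked_tree n p"
  proof -
    have "card (crossing_edges m p u u) = card (crossing_edges m p (u - 1) (u - 1)) + 1 \<or>
        card (crossing_edges m p u u) + 1 = card (crossing_edges m p (u - 1) (u - 1))"
      if "1 \<le> u" "u \<le> 2*n - 3" for u
    proof -
      have "u - 1 \<le> 2*n - 3"
        using that by linarith
      with F_sequence_squareD(4)[OF seq that] card[of u u] card[of "u - 1" "u - 1"] that
      show ?thesis
        by (elim disjE) linarith+
    qed
    moreover have "card (crossing_edges m p 0 0) = 2"
      using F_sequence_squareD(3)[OF seq] card[of 0 0] by simp
    ultimately show ?thesis
      using fh_ranked_tree_iff_diagonal[OF assms(1)] parent(1) by (simp add: m_def)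
  qed
  moreover have "f i j = F_matrix n p i j" if "j \<le> i" "i \<le> 2*n - 3" for i j
    using card[OF that] that by (simp add: F_matrix_eq_card_crossing_edges m_def)
  ultimately show thesis
    using that by blast
qed

theorem corollary2:
  fixes n :: nat and F :: "nat \<Rightarrow> nat \<Rightarrow> int"
  assumes "n \<ge> 2"
    and lower: "\<forall>i j. i < j \<and> j \<le> 2*n - 3 \<longrightarrow> F i j = 0"
  shows "(\<exists>p. fh_ranked_tree n p \<and>
            (\<forall>i j. i \<le> 2*n - 3 \<and> j \<le> 2*n - 3 \<longrightarrow> F i j = F_matrix n p i j))
         \<longleftrightarrow> F_sequence n (2*n - 3) (2*n - 3) F"
proof
  assume "\<exists>p. fh_ranked_tree n p \<and>
            (\<forall>i j. i \<le> 2*n - 3 \<and> j \<le> 2*n - 3 \<longrightarrow> F i j = F_matrix n p i j)"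
  then obtain p where "fh_ranked_tree n p"
    and "\<forall>i j. i \<le> 2*n - 3 \<and> j \<le> 2*n - 3 \<longrightarrow> F i j = F_matrix n p i j"
    by blast
  then show "F_sequence n (2*n - 3) (2*n - 3) F"
    using F_sequence_of_tree[of n p "2*n - 3" F] assms(1) by auto
next
  assume "F_sequence n (2*n - 3) (2*n - 3) F"
  then obtain p where "fh_ranked_tree n p"
    and "\<forall>i j. j \<le> i \<and> i \<le> 2*n - 3 \<longrightarrow> F i j = F_matrix n p i j"
    using tree_of_F_sequence assms(1) by blast
  moreover have "F i j = F_matrix n p i j" if "i < j" "j \<le> 2*n - 3" for i j
    using lower that by (simp add: F_matrix_def)
  ultimately show "\<exists>p. fh_ranked_tree n p \<and>
            (\<forall>i j. i \<le> 2*n - 3 \<and> j \<le> 2*n - 3 \<longrightarrow> F i j = F_matrix n p i j)"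
    by (metis not_le)
qed

end
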